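(* For every message $M$ and formulas $\phi,\psi$: $\vdash\mathsf{k}_{\mathsf{CM}}(M)\to\big([M](\phi\vee\psi)\to([M]\phi\vee[M]\psi)\big)$.
   Context: Fix a finite set $\mathcal{A}$ of agent names containing a distinguished name $\mathsf{CM}$. Messages: $M ::= a \mid B \mid (M,M)$ ($a\in\mathcal{A}$, $B$ optional data constants, pairs). $\mathcal{P}$ is a denumerable set of propositional variables containing atoms $\mathsf{k}_a(M)$ ("$a$ knows $M$"). Formulas: $\phi ::= P \mid \phi\wedge\phi \mid \phi\vee\phi \mid \neg\phi \mid \phi\to\phi \mid [M]\phi$. Abbreviations: $\mathrm{true}:=\mathsf{k}_{\mathsf{CM}}(\mathsf{CM})$, $\mathrm{false}:=\neg\mathrm{true}$, $\phi\leftrightarrow\psi:=(\phi\to\psi)\wedge(\psi\to\phi)$, $\langle M\rangle\phi:=\neg\neg(\mathsf{k}_{\mathsf{CM}}(M)\wedge\phi)$. LIiP is the smallest set of formulas containing all instances of: the axioms of an adequate Hilbert axiomatization of intuitionistic propositional logic; $\mathsf{k}_a(a)$; $(\mathsf{k}_a(M)\wedge\mathsf{k}_a(M'))\leftrightarrow\mathsf{k}_a((M,M'))$; $[M]\mathsf{k}_{\mathsf{CM}}(M)$; $[M](\phi\to\psi)\to([M]\phi\to[M]\psi)$; $[M]\phi\to(\mathsf{k}_{\mathsf{CM}}(M)\to\phi)$; $[M]\phi\to\langle M\rangle\phi$; $\phi\to[M]\phi$; and closed under modus ponens and the rule: if $\mathsf{k}_{\mathsf{CM}}(M)\to\mathsf{k}_{\mathsf{CM}}(M')$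 is in the set then so is $[M']\phi\to[M]\phi$ for every $\phi$. Write $\vdash\phi$ for $\phi\in\mathrm{LIiP}$. *)

theory Defs
  imports Main
begin

datatype ('a, 'b) msg = Ag 'a | Dat 'b | Pair "('a, 'b) msg" "('a, 'b) msg"

text \<open>Propositional variables: knowledge atoms k_a(M), plus a denumerable
 supply of further variables.\<close>
datatype ('a, 'b) pvar = Kn 'a "('a, 'b) msg" | PV nat

datatype ('a, 'b) fm =
    Var "('a, 'b) pvar"
  | Conj "('a, 'b) fm" "('a, 'b) fm"
  | Disj "('a, 'b) fm" "('a, 'b) fm"
  | Neg "('a, 'b) fm"
  | Imp "('a, 'b) fm" "('a, 'b) fm"
  | Box "('a, 'b) msg" "('a, 'b) fm"

definition K :: "'a \<Rightarrow> ('a, 'b) msg \<Rightarrow> ('a, 'b) fm" where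
  "K a M = Var (Kn a M)"

definition TT :: "'a \<Rightarrow> ('a, 'b) fm" where
  "TT cm = K cm (Ag cm)"

definition FF :: "'a \<Rightarrow> ('a, 'b) fm" where
  "FF cm = Neg (TT cm)"

definition Iff :: "('a, 'b) fm \<Rightarrow> ('a, 'b) fm \<Rightarrow> ('a, 'b) fm" where
  "Iff p q = Conj (Imp p q) (Imp q p)"

definition Dia :: "'a \<Rightarrow> ('a, 'b) msg \<Rightarrow> ('a, 'b) fm \<Rightarrow> ('a, 'b) fm" where
  "Dia cm M p = Neg (Neg (Conj (K cm M) p))"

text \<open>LIiP, parameterised by the distinguished agent name cm (= CM).
 The intuitionistic propositional part uses the standard Hilbert system
 (Kleene) for the connectives and, imp, or, not.\<close>
inductive LIiP :: "'a \<Rightarrow> ('a, 'b) fm \<Rightarrow> bool" for cm :: 'a where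
  ip1: "LIiP cm (Imp p (Imp q p))"
| ip2: "LIiP cm (Imp (Imp p (Imp q r)) (Imp (Imp p q) (Imp p r)))"
| ip3: "LIiP cm (Imp p (Imp q (Conj p q)))"
| ip4: "LIiP cm (Imp (Conj p q) p)"
| ip5: "LIiP cm (Imp (Conj p q) q)"
| ip6: "LIiP cm (Imp p (Disj p q))"
| ip7: "LIiP cm (Imp q (Disj p q))"
| ip8: "LIiP cm (Imp (Imp p r) (Imp (Imp q r) (Imp (Disj p q) r)))"
| ip9: "LIiP cm (Imp (Imp p q) (Imp (Imp p (Neg q)) (Neg p)))"
| ip10: "LIiP cm (Imp (Neg p) (Imp p q))"
| kself: "LIiP cm (K a (Ag a))"
| kpair: "LIiP cm (Iff (Conj (K a M) (K a M')) (K a (Pair M M')))"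
| boxk: "LIiP cm (Box M (K cm M))"
| boxK: "LIiP cm (Imp (Box M (Imp p q)) (Imp (Box M p) (Box M q)))"
| boxT: "LIiP cm (Imp (Box M p) (Imp (K cm M) p))"
| boxD: "LIiP cm (Imp (Box M p) (Dia cm M p))"
| boxI: "LIiP cm (Imp p (Box M p))"
| mp: "LIiP cm (Imp p q) \<Longrightarrow> LIiP cm p \<Longrightarrow> LIiP cm q"
| mono: "LIiP cm (Imp (K cm M) (K cm M')) \<Longrightarrow> LIiP cm (Imp (Box M' p) (Box M p))"

end

theory Submission
  imports Defs
begin

text \<open>By necessitation-as-axiom (\<open>\<phi> \<rightarrow> [M]\<phi>\<close>) each disjunct of \<open>\<phi> \<or> \<psi>\<close>
  yields the corresponding boxed disjunct, so \<open>\<phi> \<or> \<psi> \<rightarrow> [M]\<phi> \<or> [M]\<psi>\<close>;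
  and given \<open>k\<^sub>C\<^sub>M(M)\<close>, the axiom \<open>[M]\<phi> \<rightarrow> (k\<^sub>C\<^sub>M(M) \<rightarrow> \<phi>)\<close> unboxes
  \<open>[M](\<phi> \<or> \<psi>)\<close>.\<close>

lemma LIiP_imp_trans:
  assumes "LIiP c (Imp p q)" and "LIiP c (Imp q r)"
  shows "LIiP c (Imp p r)"
proof -
  have "LIiP c (Imp p (Imp q r))" by (rule mp[OF ip1 assms(2)])
  then have "LIiP c (Imp (Imp p q) (Imp p r))" by (rule mp[OF ip2])
  then show ?thesis using assms(1) by (rule mp)
qed

lemma LIiP_imp_concl_mono:
  assumes "LIiP c (Imp q r)"
  shows "LIiP c (Imp (Imp p q) (Imp p r))"
  by (rule mp[OF ip2 mp[OF ip1 assms]])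

lemma LIiP_imp_swap:
  assumes "LIiP c (Imp p (Imp q r))"
  shows "LIiP c (Imp q (Imp p r))"
proof -
  have "LIiP c (Imp (Imp p q) (Imp p r))" by (rule mp[OF ip2 assms])
  then show ?thesis by (rule LIiP_imp_trans[OF ip1])
qed

lemma LIiP_disj_elim:
  assumes "LIiP c (Imp p r)" and "LIiP c (Imp q r)"
  shows "LIiP c (Imp (Disj p q) r)"
  by (rule mp[OF mp[OF ip8 assms(1)] assms(2)])

lemma LIiP_disj_imp_disj_box:
  "LIiP c (Imp (Disj p q) (Disj (Box M p) (Box M q)))"
  by (rule LIiP_disj_elim[OF LIiP_imp_trans[OF boxI ip6] LIiP_imp_trans[OF boxI ip7]])

theorem theorem2p40:
  fixes CM :: "'a::finite" and M :: "('a, 'b) msg" and \<phi> \<psi> :: "('a, 'b) fm"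
  shows "LIiP CM (Imp (K CM M) (Imp (Box M (Disj \<phi> \<psi>)) (Disj (Box M \<phi>) (Box M \<psi>))))"
proof -
  have "LIiP CM (Imp (Box M (Disj \<phi> \<psi>)) (Imp (K CM M) (Disj (Box M \<phi>) (Box M \<psi>))))"
    by (rule LIiP_imp_trans[OF boxT LIiP_imp_concl_mono[OF LIiP_disj_imp_disj_box]])
  then show ?thesis by (rule LIiP_imp_swap)
qed

end
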